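(* Let $M\ge1$, $\alpha\in(0,1)$, $R_{th}>0$ and $\varepsilon=2^{2R_{th}/(1-\alpha)}-1$. For each $m\in\{1,\dots,M\}$ and each link $j\in\{SR_m,R_mD\}$ let IQI parameters $\xi_{t_j},\xi_{r_j}>0$, $\phi_{t_j},\phi_{r_j}\in\mathbb{R}$ be given, with $\mu_{t_j}=\tfrac12(1+\xi_{t_j}e^{i\phi_{t_j}})$, $v_{t_j}=\tfrac12(1-\xi_{t_j}e^{-i\phi_{t_j}})$, $\mu_{r_j}=\tfrac12(1+\xi_{r_j}e^{-i\phi_{r_j}})$, $v_{r_j}=\tfrac12(1-\xi_{r_j}e^{i\phi_{r_j}})$, $p_j=|\mu_{t_j}\mu_{r_j}+v_{t_j}^*v_{r_j}|^2$, $q_j=|\mu_{r_j}v_{t_j}+\mu_{t_j}^*v_{r_j}|^2$, and assume $p_j-\varepsilon q_j>0$. Let the random variables $X_j$, $j\in\{SR_m,R_mD: 1\le m\le M\}$, be mutually independent with $X_j$ exponential of rate $\lambda_j>0$, and let all estimation-error variances equal $t>0$: $\sigma^2_{e_j}=t$. Define $$C^\infty_j=\frac{1-\alpha}{2}\log_2\!\Big(1+\frac{X_jp_j}{\sigma^2_{e_j}p_j+X_jq_j+\sigma^2_{e_j}q_j}\Big).$$ Then $$\Pr\Big\{\max_{1\le m\le M}\min(C^\infty_{SR_m},C^\infty_{R_mD})<R_{th}\Big\}=\prod_{m=1}^M\Big(1-e^{-\lambda_{SR_m}H_{1,m}-\lambda_{R_mD}H_{2,m}}\Big),$$ where $H_{1,m}=\dfrac{\varepsilon\sigma^2_{e_{SR_m}}(p_{SR_m}+q_{SR_m})}{p_{SR_m}-\varepsilon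 q_{SR_m}}$ and $H_{2,m}=\dfrac{\varepsilon\sigma^2_{e_{R_mD}}(p_{R_mD}+q_{R_mD})}{p_{R_mD}-\varepsilon q_{R_mD}}$.
   Context: Decode-and-forward relaying with $M$ relays and optimal relay selection: the relay maximizing the end-to-end capacity $\min(C_{SR_m},C_{R_mD})$ is selected. $X_j=|\hat h_j|^2$ are estimated Rayleigh channel gains, $\sigma^2_{e_j}$ channel-estimation-error variances, $p_j,q_j$ the I/Q-imbalance gain coefficients. The left-hand side is the asymptotic (high-SNR) outage probability; $z^*$ is complex conjugate, $i$ the imaginary unit. *)

theory Defs
  imports "HOL-Probability.Probability"
begin

text \<open>IQI coefficients. Links are indexed by pairs (m, b): (m, True) is the link S-R_m,
  (m, False) is the link R_m-D.\<close>

definition mu_t :: "real \<Rightarrow> real \<Rightarrow> complex" where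
  "mu_t xi phi = (1 + complex_of_real xi * cis phi) / 2"
definition v_t :: "real \<Rightarrow> real \<Rightarrow> complex" where
  "v_t xi phi = (1 - complex_of_real xi * cis (- phi)) / 2"
definition mu_r :: "real \<Rightarrow> real \<Rightarrow> complex" where
  "mu_r xi phi = (1 + complex_of_real xi * cis (- phi)) / 2"
definition v_r :: "real \<Rightarrow> real \<Rightarrow> complex" where
  "v_r xi phi = (1 - complex_of_real xi * cis phi) / 2"

definition iqi_p :: "real \<Rightarrow> real \<Rightarrow> real \<Rightarrow> real \<Rightarrow> real" where
  "iqi_p xt pt xr pr =
     (cmod (mu_t xt pt * mu_r xr pr + cnj (v_t xt pt) * v_r xr pr))\<^sup>2"
definition iqi_q :: "real \<Rightarrow> real \<Rightarrow> real \<Rightarrow> real \<Rightarrow> real" where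
  "iqi_q xt pt xr pr =
     (cmod (mu_r xr pr * v_t xt pt + cnj (mu_t xt pt) * v_r xr pr))\<^sup>2"

definition cap_inf :: "real \<Rightarrow> real \<Rightarrow> real \<Rightarrow> real \<Rightarrow> real \<Rightarrow> real" where
  "cap_inf \<alpha> s p q x = (1 - \<alpha>) / 2 * log 2 (1 + x * p / (s * p + x * q + s * q))"

definition thr_eps :: "real \<Rightarrow> real \<Rightarrow> real" where
  "thr_eps \<alpha> Rth = 2 powr (2 * Rth / (1 - \<alpha>)) - 1"

definition H_coef :: "real \<Rightarrow> real \<Rightarrow> real \<Rightarrow> real \<Rightarrow> real" where
  "H_coef \<epsilon> s p q = \<epsilon> * s * (p + q) / (p - \<epsilon> * q)"

end

theory Submission
  imports Defs
begin

(* Solving the SINR inequality (possible because p > eps q) shows that a link is in outage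
   exactly when its gain X_j lies below H_j. A rescaled gain X_j / H_j is exponential with
   rate lam_j H_j, so relay m is in outage iff the minimum of its two rescaled gains is below 1,
   and that minimum is exponential with rate lam_SR H_SR + lam_RD H_RD. Independence across
   the relays turns "every relay is in outage" into a product. *)

lemma thr_eps_pos: "\<alpha> < 1 \<Longrightarrow> 0 < Rth \<Longrightarrow> 0 < thr_eps \<alpha> Rth"
  by (simp add: thr_eps_def)

lemma H_coef_pos:
  assumes "0 < e" "0 < t" "0 \<le> q" "e * q < p"
  shows "0 < H_coef e t p q"
proof -
  have "0 \<le> e * q"
    using assms by simp
  then have "0 < p + q" and "0 < p - e * q"
    using assms by linarith+
  then show ?thesis
    unfolding H_coef_def using assms by simp
qed

lemma cap_inf_less_iff_sinr:
  assumes "\<alpha> < 1" and "-1 < x * p / (t * p + x * q + t * q)"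
  shows "cap_inf \<alpha> t p q x < Rth \<longleftrightarrow> x * p / (t * p + x * q + t * q) < thr_eps \<alpha> Rth"
proof -
  have "cap_inf \<alpha> t p q x < Rth
      \<longleftrightarrow> log 2 (1 + x * p / (t * p + x * q + t * q)) < 2 * Rth / (1 - \<alpha>)"
    unfolding cap_inf_def using assms(1) by (simp add: field_simps)
  also have "\<dots> \<longleftrightarrow> 1 + x * p / (t * p + x * q + t * q) < 2 powr (2 * Rth / (1 - \<alpha>))"
    using assms(2) by (subst log_less_iff) auto
  finally show ?thesis
    unfolding thr_eps_def by linarith
qed

lemma sinr_less_iff:
  assumes "0 < e" "0 < t" "0 \<le> q" "0 \<le> x" "e * q < p"
  shows "x * p / (t * p + x * q + t * q) < e \<longleftrightarrow> x < H_coef e t p q"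
proof -
  have "0 < t * p + x * q + t * q"
    using assms by (smt (verit) mult_nonneg_nonneg mult_pos_pos)
  then have "x * p / (t * p + x * q + t * q) < e \<longleftrightarrow> x * (p - e * q) < e * t * (p + q)"
    by (simp add: divide_less_eq algebra_simps)
  also have "\<dots> \<longleftrightarrow> x < H_coef e t p q"
    unfolding H_coef_def using assms(5) by (simp add: less_divide_eq mult.commute)
  finally show ?thesis .
qed

lemma cap_inf_less_iff:
  assumes "\<alpha> < 1" "0 < Rth" "0 < t" "0 \<le> q" "0 \<le> x" "thr_eps \<alpha> Rth * q < p"
  shows "cap_inf \<alpha> t p q x < Rth \<longleftrightarrow> x < H_coef (thr_eps \<alpha> Rth) t p q"
proof -
  have "0 \<le> x * p / (t * p + x * q + t * q)"
    using assms thr_eps_pos[of \<alpha> Rth] by (smt (verit) divide_nonneg_nonneg mult_nonneg_nonneg)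
  then show ?thesis
    using assms thr_eps_pos[of \<alpha> Rth] by (simp add: cap_inf_less_iff_sinr sinr_less_iff)
qed

lemma borel_measurable_cap_inf[measurable]:
  assumes [measurable]: "f \<in> borel_measurable M"
  shows "(\<lambda>\<omega>. cap_inf \<alpha> t p q (f \<omega>)) \<in> borel_measurable M"
  unfolding cap_inf_def by measurable

lemma (in prob_space) exponential_distributed_AE_nonneg:
  assumes "distributed M lborel X (exponential_density l)"
  shows "AE x in M. 0 \<le> X x"
  using distributed_AE2[OF assms, of "\<lambda>x. 0 \<le> x"] by (simp add: exponential_density_def)

lemma (in prob_space) exponential_distributedD_lt:
  assumes D: "distributed M lborel X (exponential_density l)" and a: "0 \<le> a" and l: "0 < l"
  shows "\<P>(x in M. X x < a) = 1 - exp (- a * l)"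
proof -
  have [measurable]: "X \<in> borel_measurable M"
    using distributed_measurable[OF D] by simp
  have "AE x in lborel. 0 < exponential_density l x \<longrightarrow> x \<noteq> a"
    using AE_lborel_singleton[of a] by eventually_elim simp
  then have "AE x in M. X x \<noteq> a"
    using distributed_AE2[OF D, of "\<lambda>x. x \<noteq> a"] by simp
  then have "AE x in M. X x < a \<longleftrightarrow> X x \<le> a"
    by eventually_elim auto
  then have "\<P>(x in M. X x < a) = \<P>(x in M. X x \<le> a)"
    by (rule prob_eq_AE) measurable
  then show ?thesis
    using exponential_distributedD_le[OF D a l] by simp
qed

lemma (in prob_space) indep_vars_indep_var:
  assumes "indep_vars M' X I" "i \<in> I" "j \<in> I" "i \<noteq> j"
  shows "indep_var (M' i) (X i) (M' j) (X j)"
proof -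
  have "indep_var (PiM {i} M') (\<lambda>\<omega>. restrict (\<lambda>k. X k \<omega>) {i})
                  (PiM {j} M') (\<lambda>\<omega>. restrict (\<lambda>k. X k \<omega>) {j})"
    using assms by (intro indep_var_restrict) auto
  then have "indep_var (M' i) ((\<lambda>f. f i) \<circ> (\<lambda>\<omega>. restrict (\<lambda>k. X k \<omega>) {i}))
                      (M' j) ((\<lambda>f. f j) \<circ> (\<lambda>\<omega>. restrict (\<lambda>k. X k \<omega>) {j}))"
    by (rule indep_var_compose) (auto intro: measurable_component_singleton)
  then show ?thesis
    by (simp add: comp_def)
qed

lemma (in prob_space) indep_vars_curry:
  assumes "indep_vars M' X (I \<times> UNIV)"
  shows "indep_vars (\<lambda>i. PiM UNIV (\<lambda>j. M' (i, j))) (\<lambda>i \<omega> j. X (i, j) \<omega>) I"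
proof -
  have "indep_vars (\<lambda>i. PiM ({i} \<times> UNIV) M') (\<lambda>i \<omega>. restrict (\<lambda>k. X k \<omega>) ({i} \<times> UNIV)) I"
    using assms by (intro indep_vars_restrict) (auto simp: disjoint_family_on_def)
  then have "indep_vars (\<lambda>i. PiM UNIV (\<lambda>j. M' (i, j)))
               (\<lambda>i \<omega>. (\<lambda>f j. f (i, j)) (restrict (\<lambda>k. X k \<omega>) ({i} \<times> UNIV))) I"
    by (rule indep_vars_compose2)
       (auto simp: space_PiM PiE_iff intro!: measurable_PiM_single' measurable_component_singleton)
  then show ?thesis
    by simp
qed

lemma (in prob_space) exponential_distributed_min_scaled:
  assumes X: "distributed M lborel X (exponential_density l)"
    and Y: "distributed M lborel Y (exponential_density u)"
    and ind: "indep_var borel X borel Y"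
    and "0 < l" "0 < u" "0 < a" "0 < b"
  shows "distributed M lborel (\<lambda>\<omega>. min (X \<omega> / a) (Y \<omega> / b)) (exponential_density (l * a + u * b))"
proof -
  have "distributed M lborel (\<lambda>\<omega>. (1 / a) * X \<omega>) (exponential_density (l / (1 / a)))"
    using assms by (intro erlang_distributed_mult_const[OF X]) auto
  then have X': "distributed M lborel (\<lambda>\<omega>. X \<omega> / a) (exponential_density (l * a))"
    by simp
  have "distributed M lborel (\<lambda>\<omega>. (1 / b) * Y \<omega>) (exponential_density (u / (1 / b)))"
    using assms by (intro erlang_distributed_mult_const[OF Y]) auto
  then have Y': "distributed M lborel (\<lambda>\<omega>. Y \<omega> / b) (exponential_density (u * b))"
    by simp
  have "indep_var borel ((\<lambda>x. x / a) \<circ> X) borel ((\<lambda>y. y / b) \<circ> Y)"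
    by (rule indep_var_compose[OF ind]) auto
  then have "indep_var borel (\<lambda>\<omega>. X \<omega> / a) borel (\<lambda>\<omega>. Y \<omega> / b)"
    by (simp add: comp_def)
  with X' Y' show ?thesis
    using assms by (intro exponential_distributed_min) auto
qed

lemma (in prob_space) prob_exponential_pairs_one_below:
  fixes X :: "'i \<times> bool \<Rightarrow> 'a \<Rightarrow> real"
  assumes "finite I"
    and ind: "indep_vars (\<lambda>_. borel) X (I \<times> UNIV)"
    and D: "\<And>j. j \<in> I \<times> UNIV \<Longrightarrow> distributed M lborel (X j) (exponential_density (lam j))"
    and lam: "\<And>j. j \<in> I \<times> UNIV \<Longrightarrow> 0 < lam j"
    and H: "\<And>j. j \<in> I \<times> UNIV \<Longrightarrow> 0 < H j"
  shows "\<P>(\<omega> in M. \<forall>i\<in>I. X (i, True) \<omega> < H (i, True) \<or> X (i, False) \<omega> < H (i, False))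
       = (\<Prod>i\<in>I. 1 - exp (- lam (i, True) * H (i, True) - lam (i, False) * H (i, False)))"
proof (cases "I = {}")
  case False
  define Z where "Z i \<omega> = min (X (i, True) \<omega> / H (i, True)) (X (i, False) \<omega> / H (i, False))"
    for i \<omega>
  have Z_exp: "distributed M lborel (Z i)
      (exponential_density (lam (i, True) * H (i, True) + lam (i, False) * H (i, False)))"
    if "i \<in> I" for i
    unfolding Z_def using that lam H
    by (intro exponential_distributed_min_scaled D indep_vars_indep_var[OF ind]) auto
  have "indep_vars (\<lambda>_. borel)
      (\<lambda>i \<omega>. (\<lambda>f. min (f True / H (i, True)) (f False / H (i, False))) (\<lambda>j. X (i, j) \<omega>)) I"
    by (rule indep_vars_compose2[OF indep_vars_curry[OF ind]]) measurable
  then have Z_indep: "indep_vars (\<lambda>_. borel) Z I"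
    by (simp add: Z_def[abs_def])
  have "\<P>(\<omega> in M. \<forall>i\<in>I. X (i, True) \<omega> < H (i, True) \<or> X (i, False) \<omega> < H (i, False))
      = prob (\<Inter>i\<in>I. Z i -` {..<1} \<inter> space M)"
  proof -
    have "X (i, b) \<omega> / H (i, b) < 1 \<longleftrightarrow> X (i, b) \<omega> < H (i, b)" if "i \<in> I" for i b \<omega>
      using H that by (simp add: pos_divide_less_eq)
    then show ?thesis
      using False by (intro arg_cong[where f=prob]) (auto simp: Z_def min_less_iff_disj)
  qed
  also have "\<dots> = (\<Prod>i\<in>I. prob (Z i -` {..<1} \<inter> space M))"
    using False \<open>finite I\<close> by (intro indep_varsD_finite[OF Z_indep]) auto
  also have "\<dots> = (\<Prod>i\<in>I. 1 - exp (- lam (i, True) * H (i, True) - lam (i, False) * H (i, False)))"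
  proof (intro prod.cong refl)
    fix i assume "i \<in> I"
    then have "0 < lam (i, True) * H (i, True) + lam (i, False) * H (i, False)"
      using lam H by (simp add: add_pos_pos)
    then show "prob (Z i -` {..<1} \<inter> space M)
        = 1 - exp (- lam (i, True) * H (i, True) - lam (i, False) * H (i, False))"
      using exponential_distributedD_lt[OF Z_exp[OF \<open>i \<in> I\<close>], of 1]
      by (simp add: vimage_def Int_def conj_commute)
  qed
  finally show ?thesis .
qed (simp add: prob_space)

lemma (in prob_space) outage_probability:
  fixes I :: "'i set" and X :: "'i \<times> bool \<Rightarrow> 'a \<Rightarrow> real" and p q lam :: "'i \<times> bool \<Rightarrow> real"
  assumes [simp]: "finite I" and "I \<noteq> {}" "\<alpha> < 1" "0 < Rth" "0 < t"
    and "\<And>j. j \<in> I \<times> UNIV \<Longrightarrow> 0 \<le> q j"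
    and "\<And>j. j \<in> I \<times> UNIV \<Longrightarrow> thr_eps \<alpha> Rth * q j < p j"
    and lam: "\<And>j. j \<in> I \<times> UNIV \<Longrightarrow> 0 < lam j"
    and D: "\<And>j. j \<in> I \<times> UNIV \<Longrightarrow> distributed M lborel (X j) (exponential_density (lam j))"
    and ind: "indep_vars (\<lambda>_. borel) X (I \<times> UNIV)"
  shows "\<P>(\<omega> in M. Max ((\<lambda>i. min (cap_inf \<alpha> t (p (i, True)) (q (i, True)) (X (i, True) \<omega>))
                                (cap_inf \<alpha> t (p (i, False)) (q (i, False)) (X (i, False) \<omega>))) ` I) < Rth)
       = (\<Prod>i\<in>I. 1 - exp (- lam (i, True) * H_coef (thr_eps \<alpha> Rth) t (p (i, True)) (q (i, True))
                             - lam (i, False) * H_coef (thr_eps \<alpha> Rth) t (p (i, False)) (q (i, False))))"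
proof -
  define H where "H j = H_coef (thr_eps \<alpha> Rth) t (p j) (q j)" for j
  have H_pos: "0 < H j" if "j \<in> I \<times> UNIV" for j
    unfolding H_def using that assms thr_eps_pos by (intro H_coef_pos) auto
  have [measurable]: "X (i, b) \<in> borel_measurable M" if "i \<in> I" for i b
    using distributed_measurable[OF D] that by simp
  have "AE \<omega> in M. \<forall>j\<in>I \<times> UNIV. 0 \<le> X j \<omega>"
    using \<open>finite I\<close> D by (intro AE_finite_allI exponential_distributed_AE_nonneg) auto
  then have "AE \<omega> in M.
      Max ((\<lambda>i. min (cap_inf \<alpha> t (p (i, True)) (q (i, True)) (X (i, True) \<omega>))
                    (cap_inf \<alpha> t (p (i, False)) (q (i, False)) (X (i, False) \<omega>))) ` I) < Rth
      \<longleftrightarrow> (\<forall>i\<in>I. X (i, True) \<omega> < H (i, True) \<or> X (i, False) \<omega> < H (i, False))"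
  proof eventually_elim
    case (elim \<omega>)
    have "cap_inf \<alpha> t (p (i, b)) (q (i, b)) (X (i, b) \<omega>) < Rth \<longleftrightarrow> X (i, b) \<omega> < H (i, b)"
      if "i \<in> I" for i b
      unfolding H_def using that elim assms by (intro cap_inf_less_iff) auto
    then show ?case
      using \<open>finite I\<close> \<open>I \<noteq> {}\<close> by (simp add: Max_less_iff min_less_iff_disj)
  qed
  then have "\<P>(\<omega> in M. Max ((\<lambda>i. min (cap_inf \<alpha> t (p (i, True)) (q (i, True)) (X (i, True) \<omega>))
                                (cap_inf \<alpha> t (p (i, False)) (q (i, False)) (X (i, False) \<omega>))) ` I) < Rth)
      = \<P>(\<omega> in M. \<forall>i\<in>I. X (i, True) \<omega> < H (i, True) \<or> X (i, False) \<omega> < H (i, False))"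
    by (rule prob_eq_AE) measurable
  also have "\<dots> = (\<Prod>i\<in>I. 1 - exp (- lam (i, True) * H (i, True) - lam (i, False) * H (i, False)))"
    using \<open>finite I\<close> ind D lam H_pos by (rule prob_exponential_pairs_one_below)
  finally show ?thesis
    unfolding H_def .
qed

theorem corollary5:
  fixes P :: "'a measure"
    and M :: nat and \<alpha> Rth t :: real
    and xit xir phit phir lam :: "nat \<times> bool \<Rightarrow> real"
    and X :: "nat \<times> bool \<Rightarrow> 'a \<Rightarrow> real"
  assumes "prob_space P"
    and "M \<ge> 1" and "0 < \<alpha>" and "\<alpha> < 1" and "Rth > 0" and "t > 0"
    and "\<And>j. j \<in> {1..M} \<times> UNIV \<Longrightarrow> xit j > 0 \<and> xir j > 0"
    and "\<And>j. j \<in> {1..M} \<times> UNIV \<Longrightarrow>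
           iqi_p (xit j) (phit j) (xir j) (phir j)
             - thr_eps \<alpha> Rth * iqi_q (xit j) (phit j) (xir j) (phir j) > 0"
    and "\<And>j. j \<in> {1..M} \<times> UNIV \<Longrightarrow> lam j > 0"
    and "\<And>j. j \<in> {1..M} \<times> UNIV \<Longrightarrow> distributed P lborel (X j) (exponential_density (lam j))"
    and "prob_space.indep_vars P (\<lambda>_. borel) X ({1..M} \<times> UNIV)"
  shows "measure P {\<omega> \<in> space P.
            Max ((\<lambda>m. min (cap_inf \<alpha> t (iqi_p (xit (m,True)) (phit (m,True)) (xir (m,True)) (phir (m,True)))
                                     (iqi_q (xit (m,True)) (phit (m,True)) (xir (m,True)) (phir (m,True)))
                                     (X (m,True) \<omega>))
                           (cap_inf \<alpha> t (iqi_p (xit (m,False)) (phit (m,False)) (xir (m,False)) (phir (m,False)))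
                                     (iqi_q (xit (m,False)) (phit (m,False)) (xir (m,False)) (phir (m,False)))
                                     (X (m,False) \<omega>))) ` {1..M}) < Rth}
         = (\<Prod>m = 1..M. 1 - exp (
              - lam (m,True) * H_coef (thr_eps \<alpha> Rth) t
                   (iqi_p (xit (m,True)) (phit (m,True)) (xir (m,True)) (phir (m,True)))
                   (iqi_q (xit (m,True)) (phit (m,True)) (xir (m,True)) (phir (m,True)))
              - lam (m,False) * H_coef (thr_eps \<alpha> Rth) t
                   (iqi_p (xit (m,False)) (phit (m,False)) (xir (m,False)) (phir (m,False)))
                   (iqi_q (xit (m,False)) (phit (m,False)) (xir (m,False)) (phir (m,False)))))"
proof -
  interpret prob_space P by fact
  \<comment> \<open>The IQI parameters enter only through p \<ge> 0 and q \<ge> 0.\<close>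
  show ?thesis
    using assms
    by (intro outage_probability[where p = "\<lambda>j. iqi_p (xit j) (phit j) (xir j) (phir j)"
                                  and q = "\<lambda>j. iqi_q (xit j) (phit j) (xir j) (phir j)"])
       (auto simp: iqi_q_def)
qed

end
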